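(* The kernel of $F_u(\lambda_0,0)$ is one-dimensional, namely $\ker(F_u(\lambda_0,0))=\mathbb{R}\cdot S(0,\Phi_0)$, and the transversality condition $F_{\lambda,u}(\lambda_0,0)[1,S(0,\Phi_0)]\notin\mathrm{rg}(F_u(\lambda_0,0))$ holds.
   Context: $E_0$ is a real Banach space ordered by a closed convex cone $E_0^+$, $E_1$ a Banach space densely and compactly embedded in $E_0$. Fix $p\in(1,\infty)$, $\varsigma:=1-1/p$, $E_\varsigma:=(E_0,E_1)_{\varsigma,p}$ (real interpolation); for $\theta\in(0,1)\setminus\{\varsigma\}$, $E_\theta:=(E_0,E_1)_\theta$ with an admissible interpolation functor ($E_1$ dense in $E_\theta$), $E_\theta^+:=E_\theta\cap E_0^+$, and $\mathrm{int}(E_\varsigma^+)\neq\emptyset$. $a_m\in(0,\infty]$, $J:=[0,a_m)$, $\mathbb{E}_0:=L_p(J,E_0)$, $\mathbb{E}_1:=L_p(J,E_1)\cap W^1_p(J,E_0)$, $\gamma_0u:=u(0)$, $\gamma_0\in\mathcal{L}(\mathbb{E}_1,E_\varsigma)$, $\mathbb{E}_1^+:=L_p^+(J,E_1)\cap W_p^1(J,E_0)$. $\mathbb{F}$ is a Banach space with $\mathbb{E}_1$ compactly embedded in $\mathbb{F}$, $\Sigma$ an open connected $0$-neighbourhood in $\mathbb{F}$, $\Sigma_1:=\Sigma\cap\mathbb{E}_1$. For some $\vartheta\in(\varsigma,1]$: $\mathcal{A}\in C^1(\Sigma,\mathcal{L}(\mathbb{E}_1,\mathbb{E}_0))$, $\ell\in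 C^1(\Sigma,\mathcal{L}(\mathbb{E}_1,E_\vartheta))$. Standing assumptions: for all $u\in\Sigma_1$, $(\partial_a+\mathcal{A}(u),\gamma_0)\in\mathrm{Isom}(\mathbb{E}_1,\mathbb{E}_0\times E_\varsigma)$ with inverse $T[u]$, and $T[u](0,\cdot)$ maps $E_\varsigma^+$ into $\mathbb{E}_1^+$; $Q(u):=\ell(u)T[u](0,\cdot)$; $\lambda_0^{-1}>0$ is a simple eigenvalue of $Q(0)$ with an eigenvector $\Phi_0\in\mathrm{int}(E_\varsigma^+)$, and $Q(0)$ has no other eigenvalue with eigenvector in $E_\varsigma^+$. $S:=T[0]$ and $F(\lambda,u):=u-S\big((\mathcal{A}(0)-\mathcal{A}(u))u,\lambda\ell(u)u\big)$ for $(\lambda,u)\in\mathbb{R}\times\Sigma_1$; $F_u$ and $F_{\lambda,u}$ denote Fréchet derivatives. *)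

theory Defs
  imports "HOL-Analysis.Analysis"
begin

definition compact_embedding :: "('x::real_normed_vector \<Rightarrow>\<^sub>L 'y::real_normed_vector) \<Rightarrow> bool" where
  "compact_embedding f \<longleftrightarrow> inj (blinfun_apply f) \<and> compact (closure (blinfun_apply f ` cball 0 1))"

definition dense_range :: "('x::real_normed_vector \<Rightarrow>\<^sub>L 'y::real_normed_vector) \<Rightarrow> bool" where
  "dense_range f \<longleftrightarrow> closure (range (blinfun_apply f)) = UNIV"

definition C1_on :: "'x::real_normed_vector set \<Rightarrow> ('x \<Rightarrow> 'y::real_normed_vector) \<Rightarrow> bool" where
  "C1_on U f \<longleftrightarrow> (\<exists>f'. (\<forall>x\<in>U. (f has_derivative blinfun_apply (f' x)) (at x)) \<and> continuous_on U f')"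

text \<open>Simple eigenvalue = algebraically simple: the generalized eigenspace
  (union of the kernels of the powers of Q - mu) is one-dimensional.\<close>
definition gen_eigenspace :: "('x::real_vector \<Rightarrow> 'x) \<Rightarrow> real \<Rightarrow> 'x set" where
  "gen_eigenspace Q \<mu> = {x. \<exists>k. ((\<lambda>y. Q y - \<mu> *\<^sub>R y) ^^ k) x = 0}"

definition simple_eigenvalue :: "('x::real_vector \<Rightarrow> 'x) \<Rightarrow> real \<Rightarrow> bool" where
  "simple_eigenvalue Q \<mu> \<longleftrightarrow> (\<exists>e. e \<noteq> 0 \<and> gen_eigenspace Q \<mu> = range (\<lambda>t. t *\<^sub>R e))"

definition is_eigenvector :: "('x::real_vector \<Rightarrow> 'x) \<Rightarrow> real \<Rightarrow> 'x \<Rightarrow> bool" where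
  "is_eigenvector Q \<mu> x \<longleftrightarrow> x \<noteq> 0 \<and> Q x = \<mu> *\<^sub>R x"

definition ordering_cone :: "'x::real_normed_vector set \<Rightarrow> bool" where
  "ordering_cone K \<longleftrightarrow> closed K \<and> convex_cone K \<and> K \<inter> uminus ` K = {0}"

text \<open>E1 is realised inside E0 through the embedding i1.\<close>
definition Kfun :: "('b::real_normed_vector \<Rightarrow>\<^sub>L 'a::real_normed_vector) \<Rightarrow> real \<Rightarrow> 'a \<Rightarrow> real" where
  "Kfun i1 t x = Inf {norm (x - blinfun_apply i1 y) + t * norm y | y. True}"

definition interp_integral :: "real \<Rightarrow> real \<Rightarrow> ('b::real_normed_vector \<Rightarrow>\<^sub>L 'a::real_normed_vector) \<Rightarrow> 'a \<Rightarrow> ennreal" where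
  "interp_integral \<theta> p i1 x =
     (\<integral>\<^sup>+ t \<in> {0<..}. ennreal ((t powr (- \<theta>) * Kfun i1 t x) powr p / t) \<partial>lborel)"

definition interp_norm :: "real \<Rightarrow> real \<Rightarrow> ('b::real_normed_vector \<Rightarrow>\<^sub>L 'a::real_normed_vector) \<Rightarrow> 'a \<Rightarrow> real" where
  "interp_norm \<theta> p i1 x = (enn2real (interp_integral \<theta> p i1 x)) powr (1 / p)"

text \<open>js : E_theta \<rightarrow> E0 identifies the Banach space with the real interpolation space
  (E0,E1)_{theta,p} (same elements, equivalent norms).\<close>
definition is_real_interp :: "real \<Rightarrow> real \<Rightarrow> ('b::real_normed_vector \<Rightarrow>\<^sub>L 'a::real_normed_vector)
     \<Rightarrow> ('c::real_normed_vector \<Rightarrow>\<^sub>L 'a) \<Rightarrow> bool" where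
  "is_real_interp \<theta> p i1 js \<longleftrightarrow>
     inj (blinfun_apply js) \<and>
     range (blinfun_apply js) = {x. interp_integral \<theta> p i1 x < \<infinity>} \<and>
     (\<exists>c C. 0 < c \<and> 0 < C \<and> (\<forall>z. c * norm z \<le> interp_norm \<theta> p i1 (js z) \<and>
                                      interp_norm \<theta> p i1 (js z) \<le> C * norm z))"

text \<open>jt : E_theta \<rightarrow> E0 is an admissible intermediate space of exponent theta:
  E1 embeds densely (via i1t), and for theta = 1 it is E1 itself; for theta < 1
  it belongs to the classes J_theta and K_theta (the properties of an interpolation
  functor of exponent theta).\<close>
definition is_admissible_interp :: "real \<Rightarrow> ('b::real_normed_vector \<Rightarrow>\<^sub>L 'a::real_normed_vector)
     \<Rightarrow> ('d::real_normed_vector \<Rightarrow>\<^sub>L 'a) \<Rightarrow> ('b \<Rightarrow>\<^sub>L 'd) \<Rightarrow> bool" where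
  "is_admissible_interp \<theta> i1 jt i1t \<longleftrightarrow>
     inj (blinfun_apply jt) \<and> (\<forall>y. jt (i1t y) = i1 y) \<and> dense_range i1t \<and>
     (\<theta> = 1 \<longrightarrow> surj (blinfun_apply i1t)) \<and>
     (\<theta> < 1 \<longrightarrow>
        (\<exists>C. \<forall>y. norm (i1t y) \<le> C * norm (i1 y) powr (1 - \<theta>) * norm y powr \<theta>) \<and>
        (\<exists>C. \<forall>z. \<forall>t>0. t powr (- \<theta>) * Kfun i1 t (jt z) \<le> C * norm z))"

definition Jset :: "ereal \<Rightarrow> real set" where
  "Jset am = {t. 0 \<le> t \<and> ereal t < am}"

definition strongly_measurable :: "real set \<Rightarrow> (real \<Rightarrow> 'a::real_normed_vector) \<Rightarrow> bool" where
  "strongly_measurable J f \<longleftrightarrow>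
     f \<in> borel_measurable (restrict_space lebesgue J) \<and>
     (\<exists>N D. N \<in> null_sets lebesgue \<and> countable D \<and> f ` (J - N) \<subseteq> closure D)"

definition Lp_fun :: "real \<Rightarrow> real set \<Rightarrow> (real \<Rightarrow> 'a::real_normed_vector) \<Rightarrow> bool" where
  "Lp_fun p J f \<longleftrightarrow> strongly_measurable J f \<and>
     (\<integral>\<^sup>+ t \<in> J. ennreal (norm (f t) powr p) \<partial>lebesgue) < \<infinity>"

definition Lp_norm :: "real \<Rightarrow> real set \<Rightarrow> (real \<Rightarrow> 'a::real_normed_vector) \<Rightarrow> real" where
  "Lp_norm p J f = (enn2real (\<integral>\<^sup>+ t \<in> J. ennreal (norm (f t) powr p) \<partial>lebesgue)) powr (1 / p)"

definition ae_eq_on :: "real set \<Rightarrow> (real \<Rightarrow> 'a) \<Rightarrow> (real \<Rightarrow> 'a) \<Rightarrow> bool" where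
  "ae_eq_on J f g \<longleftrightarrow> (AE t in lebesgue. t \<in> J \<longrightarrow> f t = g t)"

definition test_fun :: "real set \<Rightarrow> (real \<Rightarrow> real) \<Rightarrow> bool" where
  "test_fun J \<phi> \<longleftrightarrow> \<phi> C1_differentiable_on UNIV \<and>
     compact (closure {t. \<phi> t \<noteq> 0}) \<and> closure {t. \<phi> t \<noteq> 0} \<subseteq> interior J"

definition scalar_weak_deriv :: "real set \<Rightarrow> (real \<Rightarrow> real) \<Rightarrow> (real \<Rightarrow> real) \<Rightarrow> bool" where
  "scalar_weak_deriv J g h \<longleftrightarrow> (\<forall>\<phi>. test_fun J \<phi> \<longrightarrow>
     (\<integral> t \<in> J. g t * deriv \<phi> t \<partial>lebesgue) = - (\<integral> t \<in> J. h t * \<phi> t \<partial>lebesgue))"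

text \<open>Weak derivative of a vector-valued function, tested against all continuous
  linear functionals (equivalent to the Bochner-integral definition by Hahn-Banach).\<close>
definition weak_deriv :: "real set \<Rightarrow> (real \<Rightarrow> 'a::real_normed_vector) \<Rightarrow> (real \<Rightarrow> 'a) \<Rightarrow> bool" where
  "weak_deriv J u w \<longleftrightarrow> (\<forall>\<phi> :: 'a \<Rightarrow>\<^sub>L real.
     scalar_weak_deriv J (\<lambda>t. \<phi> (u t)) (\<lambda>t. \<phi> (w t)))"

text \<open>rep identifies the Banach space 'e isometrically with L_p(J,E0)
  (elements are a.e.-classes of p-integrable strongly measurable functions).\<close>
definition is_Lp_space :: "real \<Rightarrow> real set \<Rightarrow> ('e::real_normed_vector \<Rightarrow> real \<Rightarrow> 'a::real_normed_vector) \<Rightarrow> bool" where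
  "is_Lp_space p J rep \<longleftrightarrow>
     (\<forall>x. Lp_fun p J (rep x)) \<and>
     (\<forall>f. Lp_fun p J f \<longrightarrow> (\<exists>x. ae_eq_on J (rep x) f)) \<and>
     (\<forall>x y. ae_eq_on J (rep x) (rep y) \<longrightarrow> x = y) \<and>
     (\<forall>x y. ae_eq_on J (rep (x + y)) (\<lambda>t. rep x t + rep y t)) \<and>
     (\<forall>c x. ae_eq_on J (rep (c *\<^sub>R x)) (\<lambda>t. c *\<^sub>R rep x t)) \<and>
     (\<forall>x. norm x = Lp_norm p J (rep x))"

definition in_W1p :: "real \<Rightarrow> real set \<Rightarrow> ('b::real_normed_vector \<Rightarrow>\<^sub>L 'a::real_normed_vector) \<Rightarrow> (real \<Rightarrow> 'b) \<Rightarrow> bool" where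
  "in_W1p p J i1 u \<longleftrightarrow> Lp_fun p J u \<and>
     (\<exists>w. Lp_fun p J w \<and> weak_deriv J (\<lambda>t. i1 (u t)) w)"

text \<open>rep identifies the Banach space 'f with L_p(J,E1) \<inter> W^1_p(J,E0), with norm
  equivalent to |u|_{L_p(J,E1)} + |u'|_{L_p(J,E0)}.\<close>
definition is_MR_space :: "real \<Rightarrow> real set \<Rightarrow> ('b::real_normed_vector \<Rightarrow>\<^sub>L 'a::real_normed_vector)
     \<Rightarrow> ('f::real_normed_vector \<Rightarrow> real \<Rightarrow> 'b) \<Rightarrow> bool" where
  "is_MR_space p J i1 rep \<longleftrightarrow>
     (\<forall>x. in_W1p p J i1 (rep x)) \<and>
     (\<forall>u. in_W1p p J i1 u \<longrightarrow> (\<exists>x. ae_eq_on J (rep x) u)) \<and>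
     (\<forall>x y. ae_eq_on J (rep x) (rep y) \<longrightarrow> x = y) \<and>
     (\<forall>x y. ae_eq_on J (rep (x + y)) (\<lambda>t. rep x t + rep y t)) \<and>
     (\<forall>c x. ae_eq_on J (rep (c *\<^sub>R x)) (\<lambda>t. c *\<^sub>R rep x t)) \<and>
     (\<exists>c C. 0 < c \<and> 0 < C \<and> (\<forall>x w. Lp_fun p J w \<and> weak_deriv J (\<lambda>t. i1 (rep x t)) w \<longrightarrow>
         c * norm x \<le> Lp_norm p J (rep x) + Lp_norm p J w \<and>
         Lp_norm p J (rep x) + Lp_norm p J w \<le> C * norm x))"

text \<open>The nonlinear map F(lambda,u) = u - S((A(0) - A(u))u, lambda l(u)u); here iota is the
  embedding E1-bold into F-bold and jts the embedding E_vartheta into E_varsigma.\<close>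
definition Fmap :: "('f::real_normed_vector \<Rightarrow>\<^sub>L 'g::real_normed_vector)
     \<Rightarrow> ('g \<Rightarrow> ('f \<Rightarrow>\<^sub>L 'e::real_normed_vector)) \<Rightarrow> ('g \<Rightarrow> ('f \<Rightarrow>\<^sub>L 'd::real_normed_vector))
     \<Rightarrow> ('d \<Rightarrow>\<^sub>L 'c::real_normed_vector) \<Rightarrow> (('e \<times> 'c) \<Rightarrow>\<^sub>L 'f) \<Rightarrow> real \<Rightarrow> 'f \<Rightarrow> 'f" where
  "Fmap \<iota> A ell jts S lam u =
     u - blinfun_apply S (blinfun_apply (A 0) u - blinfun_apply (A (blinfun_apply \<iota> u)) u,
                         lam *\<^sub>R blinfun_apply jts (blinfun_apply (ell (blinfun_apply \<iota> u)) u))"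

end

theory Submission
  imports Defs
begin

text \<open>With \<open>S x = T[0](0,x)\<close> and \<open>M v = \<ell>(0) v\<close> one has \<open>F\<^sub>u(\<lambda>,0) = id - \<lambda> S M\<close>,
  \<open>F\<^sub>\<lambda>\<^sub>,\<^sub>u(\<lambda>,0) = -S M\<close> and \<open>Q(0) = M S\<close>, so everything is linear algebra of the pair \<open>S M\<close>, \<open>M S\<close>.
  A kernel vector \<open>v = \<lambda>\<^sub>0 S M v\<close> equals \<open>S y\<close> for the eigenvector \<open>y = \<lambda>\<^sub>0 M v\<close> of \<open>M S\<close>, hence is
  a multiple of \<open>S \<Phi>\<^sub>0\<close>. If \<open>S \<Phi>\<^sub>0 = w - \<lambda>\<^sub>0 S M w\<close>, then \<open>y = \<Phi>\<^sub>0 + \<lambda>\<^sub>0 M w\<close> satisfies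
  \<open>(M S - \<lambda>\<^sub>0\<^sup>-\<^sup>1) y = -\<lambda>\<^sub>0\<^sup>-\<^sup>1 \<Phi>\<^sub>0\<close>: a generalized eigenvector that is not an eigenvector,
  contradicting algebraic simplicity.\<close>

lemma gen_eigenspace_eq_span_eigenvector:
  assumes "simple_eigenvalue Q \<mu>" and "is_eigenvector Q \<mu> \<Phi>"
  shows "gen_eigenspace Q \<mu> = range (\<lambda>t. t *\<^sub>R \<Phi>)"
proof -
  obtain e where "e \<noteq> 0" and span_e: "gen_eigenspace Q \<mu> = range (\<lambda>t. t *\<^sub>R e)"
    using assms(1) unfolding simple_eigenvalue_def by blast
  have "\<Phi> \<in> gen_eigenspace Q \<mu>"
    using assms(2) unfolding gen_eigenspace_def is_eigenvector_def
    by (intro CollectI exI[of _ 1]) simp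
  then obtain c where c: "\<Phi> = c *\<^sub>R e"
    using span_e by auto
  with assms(2) have "c \<noteq> 0"
    by (auto simp: is_eigenvector_def)
  have "range (\<lambda>t. t *\<^sub>R e) = range (\<lambda>t. t *\<^sub>R \<Phi>)"
  proof (intro equalityI image_subsetI)
    fix t
    show "t *\<^sub>R e \<in> range (\<lambda>t. t *\<^sub>R \<Phi>)"
      using c \<open>c \<noteq> 0\<close> by (intro image_eqI[where x = "t / c"]) auto
    show "t *\<^sub>R \<Phi> \<in> range (\<lambda>t. t *\<^sub>R e)"
      using c by (intro image_eqI[where x = "t * c"]) auto
  qed
  with span_e show ?thesis
    by simp
qed

locale factorised_eigenproblem =
  fixes S :: "'c::real_vector \<Rightarrow> 'f::real_vector" and M :: "'f \<Rightarrow> 'c"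
    and lam :: real and \<Phi> :: 'c
  assumes linear_S: "linear S" and linear_M: "linear M"
    and nonzero: "lam \<noteq> 0"
    and simple: "simple_eigenvalue (\<lambda>x. M (S x)) (inverse lam)"
    and eigenvector: "is_eigenvector (\<lambda>x. M (S x)) (inverse lam) \<Phi>"
begin

lemma gen_eigenspace_eq: "gen_eigenspace (\<lambda>x. M (S x)) (inverse lam) = range (\<lambda>t. t *\<^sub>R \<Phi>)"
  using gen_eigenspace_eq_span_eigenvector[OF simple eigenvector] .

lemma eigen_equation: "M (S \<Phi>) = inverse lam *\<^sub>R \<Phi>" and eigenvector_nonzero: "\<Phi> \<noteq> 0"
  using eigenvector by (simp_all add: is_eigenvector_def)

lemma kernel_eq_span: "{v. v - lam *\<^sub>R S (M v) = 0} = range (\<lambda>t. t *\<^sub>R S \<Phi>)"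
proof (intro equalityI subsetI)
  fix v assume "v \<in> {v. v - lam *\<^sub>R S (M v) = 0}"
  then have v: "v = S (lam *\<^sub>R M v)"
    by (simp add: linear_cmul[OF linear_S])
  have "M (S (lam *\<^sub>R M v)) = inverse lam *\<^sub>R (lam *\<^sub>R M v)"
    using nonzero by (simp flip: v)
  then have "lam *\<^sub>R M v \<in> gen_eigenspace (\<lambda>x. M (S x)) (inverse lam)"
    unfolding gen_eigenspace_def by (intro CollectI exI[of _ 1]) simp
  then obtain t where "lam *\<^sub>R M v = t *\<^sub>R \<Phi>"
    using gen_eigenspace_eq by auto
  with v have "v = t *\<^sub>R S \<Phi>"
    by (simp add: linear_cmul[OF linear_S])
  then show "v \<in> range (\<lambda>t. t *\<^sub>R S \<Phi>)"
    by blast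
next
  fix v assume "v \<in> range (\<lambda>t. t *\<^sub>R S \<Phi>)"
  then obtain t where "v = t *\<^sub>R S \<Phi>"
    by auto
  then show "v \<in> {v. v - lam *\<^sub>R S (M v) = 0}"
    using nonzero
    by (simp add: linear_cmul[OF linear_S] linear_cmul[OF linear_M] eigen_equation)
qed

lemma eigenvector_image_not_in_range: "S \<Phi> \<notin> range (\<lambda>v. v - lam *\<^sub>R S (M v))"
proof
  let ?Q = "\<lambda>x. M (S x)" and ?\<mu> = "inverse lam"
  assume "S \<Phi> \<in> range (\<lambda>v. v - lam *\<^sub>R S (M v))"
  then obtain w where w: "S \<Phi> = w - lam *\<^sub>R S (M w)"
    by auto
  define y where "y = \<Phi> + lam *\<^sub>R M w"
  have "w = S y"
    using w by (simp add: y_def linear_add[OF linear_S] linear_cmul[OF linear_S])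
  then have "lam *\<^sub>R ?Q y = y - \<Phi>"
    by (simp add: y_def)
  then have "?Q y = ?\<mu> *\<^sub>R (y - \<Phi>)"
    using nonzero by (metis scaleR_scaleR left_inverse scaleR_one)
  then have defect: "?Q y - ?\<mu> *\<^sub>R y = - ?\<mu> *\<^sub>R \<Phi>"
    by (simp add: scaleR_diff_right)
  have "?Q (?Q y - ?\<mu> *\<^sub>R y) - ?\<mu> *\<^sub>R (?Q y - ?\<mu> *\<^sub>R y) = 0"
    unfolding defect
    by (simp add: linear_cmul[OF linear_S] linear_cmul[OF linear_M] linear_neg[OF linear_S]
        linear_neg[OF linear_M] eigen_equation)
  then have "y \<in> gen_eigenspace ?Q ?\<mu>"
    unfolding gen_eigenspace_def by (intro CollectI exI[of _ 2]) (simp add: numeral_2_eq_2)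
  then obtain t where "y = t *\<^sub>R \<Phi>"
    using gen_eigenspace_eq by auto
  then have "?Q y - ?\<mu> *\<^sub>R y = 0"
    by (simp add: linear_cmul[OF linear_S] linear_cmul[OF linear_M] eigen_equation)
  with defect nonzero eigenvector_nonzero show False
    by simp
qed

lemma transversality: "- S (M (S \<Phi>)) \<notin> range (\<lambda>v. v - lam *\<^sub>R S (M v))"
proof
  assume "- S (M (S \<Phi>)) \<in> range (\<lambda>v. v - lam *\<^sub>R S (M v))"
  then obtain w where w: "- S (M (S \<Phi>)) = w - lam *\<^sub>R S (M w)"
    by auto
  have "S \<Phi> = (- lam) *\<^sub>R (- S (M (S \<Phi>)))"
    using nonzero by (simp add: eigen_equation linear_cmul[OF linear_S])
  also have "\<dots> = (- lam) *\<^sub>R w - lam *\<^sub>R S (M ((- lam) *\<^sub>R w))"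
    unfolding w by (simp add: linear_cmul[OF linear_S] linear_cmul[OF linear_M]
        linear_neg[OF linear_S] linear_neg[OF linear_M] algebra_simps)
  finally have "S \<Phi> \<in> range (\<lambda>v. v - lam *\<^sub>R S (M v))"
    by (rule image_eqI[OF _ UNIV_I])
  with eigenvector_image_not_in_range show False
    by contradiction
qed

end

lemma has_derivative_Fmap_at_0:
  fixes \<iota> :: "'f::real_normed_vector \<Rightarrow>\<^sub>L 'g::real_normed_vector"
    and A :: "'g \<Rightarrow> ('f \<Rightarrow>\<^sub>L 'e::real_normed_vector)"
    and ell :: "'g \<Rightarrow> ('f \<Rightarrow>\<^sub>L 'd::real_normed_vector)" and jts :: "'d \<Rightarrow>\<^sub>L 'c::real_normed_vector"
    and S :: "('e \<times> 'c) \<Rightarrow>\<^sub>L 'f"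
  assumes "(A has_derivative A') (at 0)" and "(ell has_derivative L') (at 0)"
  shows "(Fmap \<iota> A ell jts S lam has_derivative (\<lambda>v. v - lam *\<^sub>R S (0, jts (ell 0 v)))) (at 0)"
proof -
  have \<iota>: "(blinfun_apply \<iota> has_derivative blinfun_apply \<iota>) (at 0)"
    by (rule bounded_linear_imp_has_derivative) (rule blinfun.bounded_linear_right)
  text \<open>Product rule: the derivative of \<open>u \<mapsto> A(\<iota> u) u\<close> at \<open>0\<close> is \<open>A(0)\<close>, since the
    term \<open>A'(\<iota> h) 0\<close> vanishes; likewise for \<open>\<ell>\<close>.\<close>
  have "((\<lambda>u. A (\<iota> u)) has_derivative (\<lambda>h. A' (\<iota> h))) (at 0)"
    using has_derivative_compose[OF \<iota>, of A A'] assms(1) by simp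
  from blinfun.FDERIV[OF this has_derivative_ident]
  have Au: "((\<lambda>u. A (\<iota> u) u) has_derivative (\<lambda>h. A 0 h)) (at 0)"
    by simp
  have "((\<lambda>u. ell (\<iota> u)) has_derivative (\<lambda>h. L' (\<iota> h))) (at 0)"
    using has_derivative_compose[OF \<iota>, of ell L'] assms(2) by simp
  from blinfun.FDERIV[OF this has_derivative_ident]
  have Lu: "((\<lambda>u. ell (\<iota> u) u) has_derivative (\<lambda>h. ell 0 h)) (at 0)"
    by simp
  have "((\<lambda>u. u - S (A 0 u - A (\<iota> u) u, lam *\<^sub>R jts (ell (\<iota> u) u))) has_derivative
         (\<lambda>h. h - S (A 0 h - A 0 h, lam *\<^sub>R jts (ell 0 h)))) (at 0)"
    by (intro derivative_intros bounded_linear.has_derivative[OF blinfun.bounded_linear_right]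
        has_derivative_Pair Au Lu bounded_linear_imp_has_derivative blinfun.bounded_linear_right)
  moreover have "S (A 0 h - A 0 h, lam *\<^sub>R jts (ell 0 h)) = lam *\<^sub>R S (0, jts (ell 0 h))" for h
    by (metis blinfun.scaleR_right diff_self scaleR_Pair scaleR_zero_right)
  ultimately show ?thesis
    unfolding Fmap_def by simp
qed

lemma Fmap_partial_derivatives:
  fixes \<iota> :: "'f::real_normed_vector \<Rightarrow>\<^sub>L 'g::real_normed_vector"
    and A :: "'g \<Rightarrow> ('f \<Rightarrow>\<^sub>L 'e::real_normed_vector)"
    and ell :: "'g \<Rightarrow> ('f \<Rightarrow>\<^sub>L 'd::real_normed_vector)" and jts :: "'d \<Rightarrow>\<^sub>L 'c::real_normed_vector"
    and S :: "('e \<times> 'c) \<Rightarrow>\<^sub>L 'f" and lam\<^sub>0 :: real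
  assumes "(A has_derivative A') (at 0)" and "(ell has_derivative L') (at 0)"
  defines "is_deriv Fu Flu \<equiv>
      (\<forall>lam. (Fmap \<iota> A ell jts S lam has_derivative blinfun_apply (Fu lam)) (at 0)) \<and>
      (Fu has_derivative (\<lambda>s. s *\<^sub>R Flu)) (at lam\<^sub>0)"
  shows "\<exists>Fu Flu. is_deriv Fu Flu"
    and "is_deriv Fu Flu \<Longrightarrow>
      blinfun_apply (Fu lam) = (\<lambda>v. v - lam *\<^sub>R S (0, jts (ell 0 v))) \<and>
      blinfun_apply Flu = (\<lambda>v. - S (0, jts (ell 0 v)))"
proof -
  have "bounded_linear (\<lambda>v. S (0, jts (ell 0 v)))"
    by (intro bounded_linear_compose[OF blinfun.bounded_linear_right] bounded_linear_Pair
        bounded_linear_zero blinfun.bounded_linear_right)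
  then obtain B :: "'f \<Rightarrow>\<^sub>L 'f" where B: "\<And>v. B v = S (0, jts (ell 0 v))"
    using bounded_linear_Blinfun_apply by metis
  define Fu0 where "Fu0 lam = id_blinfun - lam *\<^sub>R B" for lam :: real
  have Fu0: "Fu0 lam v = v - lam *\<^sub>R S (0, jts (ell 0 v))" for lam v
    by (simp add: Fu0_def blinfun.diff_left blinfun.scaleR_left B)
  have "blinfun_apply (Fu0 lam) = (\<lambda>v. v - lam *\<^sub>R S (0, jts (ell 0 v)))" for lam
    by (simp add: Fu0 fun_eq_iff)
  then have "(Fmap \<iota> A ell jts S lam has_derivative blinfun_apply (Fu0 lam)) (at 0)" for lam
    by (simp only:) (rule has_derivative_Fmap_at_0[OF assms(1,2)])
  moreover have "(Fu0 has_derivative (\<lambda>s. s *\<^sub>R (- B))) (at lam\<^sub>0)"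
    unfolding Fu0_def by (auto intro!: derivative_eq_intros)
  ultimately have deriv0: "is_deriv Fu0 (- B)"
    unfolding is_deriv_def by blast
  then show "\<exists>Fu Flu. is_deriv Fu Flu"
    by blast
  assume "is_deriv Fu Flu"
  then have "Fu = Fu0"
    using deriv0 unfolding is_deriv_def
    by (metis has_derivative_unique blinfun_apply_inject ext)
  moreover have "(\<lambda>s. s *\<^sub>R Flu) = (\<lambda>s::real. s *\<^sub>R (- B))"
    using \<open>is_deriv Fu Flu\<close> deriv0 \<open>Fu = Fu0\<close> unfolding is_deriv_def
    by (metis has_derivative_unique)
  then have "Flu = - B"
    by (metis scaleR_one)
  ultimately show "blinfun_apply (Fu lam) = (\<lambda>v. v - lam *\<^sub>R S (0, jts (ell 0 v))) \<and>
      blinfun_apply Flu = (\<lambda>v. - S (0, jts (ell 0 v)))"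
    by (simp add: Fu0 B blinfun.minus_left fun_eq_iff)
qed

theorem corollary2p5:
  fixes p theta :: real and am :: ereal
    and K :: "'a::banach set"
    and i1 :: "'b::banach \<Rightarrow>\<^sub>L 'a"
    and js :: "'c::banach \<Rightarrow>\<^sub>L 'a"
    and jt :: "'d::banach \<Rightarrow>\<^sub>L 'a" and i1t :: "'b \<Rightarrow>\<^sub>L 'd" and jts :: "'d \<Rightarrow>\<^sub>L 'c"
    and repE :: "'e::banach \<Rightarrow> real \<Rightarrow> 'a"
    and repF :: "'f::banach \<Rightarrow> real \<Rightarrow> 'b"
    and da :: "'f \<Rightarrow> 'e" and \<gamma>0 :: "'f \<Rightarrow>\<^sub>L 'c"
    and \<iota> :: "'f \<Rightarrow>\<^sub>L 'g::banach" and \<Sigma> :: "'g set"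
    and A :: "'g \<Rightarrow> ('f \<Rightarrow>\<^sub>L 'e)" and ell :: "'g \<Rightarrow> ('f \<Rightarrow>\<^sub>L 'd)"
    and T :: "'f \<Rightarrow> (('e \<times> 'c) \<Rightarrow>\<^sub>L 'f)"
    and lambda0 :: real and \<Phi>0 :: 'c
  assumes ordered: "ordering_cone K"
    and E1_emb: "compact_embedding i1" "dense_range i1"
    and p_range: "1 < p"
    and Es: "is_real_interp (1 - 1 / p) p i1 js"
    and theta: "1 - 1 / p < theta" "theta \<le> 1"
    and Etheta: "is_admissible_interp theta i1 jt i1t"
    and jts: "\<forall>z. js (jts z) = jt z"
    and int_pos: "interior {x. js x \<in> K} \<noteq> {}"
    and am: "0 < am"
    and E0bold: "is_Lp_space p (Jset am) repE"
    and E1bold: "is_MR_space p (Jset am) i1 repF"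
    and da: "\<forall>u. weak_deriv (Jset am) (\<lambda>t. i1 (repF u t)) (repE (da u))"
    and trace: "\<forall>u v. continuous_on (Jset am) v \<and> ae_eq_on (Jset am) v (\<lambda>t. i1 (repF u t))
                   \<longrightarrow> js (\<gamma>0 u) = v 0"
    and Fbold: "compact_embedding \<iota>"
    and Sigma: "open \<Sigma>" "connected \<Sigma>" "0 \<in> \<Sigma>"
    and A_C1: "C1_on \<Sigma> A"
    and l_C1: "C1_on \<Sigma> ell"
    and T_inv: "\<forall>u. \<iota> u \<in> \<Sigma> \<longrightarrow>
                 (\<forall>w. T u (da w + A (\<iota> u) w, \<gamma>0 w) = w) \<and>
                 (\<forall>f x. da (T u (f, x)) + A (\<iota> u) (T u (f, x)) = f \<and> \<gamma>0 (T u (f, x)) = x)"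
    and T_pos: "\<forall>u. \<iota> u \<in> \<Sigma> \<longrightarrow> (\<forall>x. js x \<in> K \<longrightarrow>
                 (AE t in lebesgue. t \<in> Jset am \<longrightarrow> i1 (repF (T u (0, x)) t) \<in> K))"
    and lam0: "0 < lambda0"
    and simple: "simple_eigenvalue (\<lambda>x. jts (ell 0 (T 0 (0, x)))) (inverse lambda0)"
    and eigvec: "is_eigenvector (\<lambda>x. jts (ell 0 (T 0 (0, x)))) (inverse lambda0) \<Phi>0"
    and Phi0_int: "\<Phi>0 \<in> interior {x. js x \<in> K}"
    and no_other: "\<forall>\<mu> x. is_eigenvector (\<lambda>x. jts (ell 0 (T 0 (0, x)))) \<mu> x \<and> js x \<in> K
                     \<longrightarrow> \<mu> = inverse lambda0"
  shows "(\<exists>Fu :: real \<Rightarrow> ('f \<Rightarrow>\<^sub>L 'f). \<exists>Flu :: 'f \<Rightarrow>\<^sub>L 'f.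
            (\<forall>lam. ((\<lambda>u. Fmap \<iota> A ell jts (T 0) lam u) has_derivative blinfun_apply (Fu lam)) (at 0)) \<and>
            (Fu has_derivative (\<lambda>s. s *\<^sub>R Flu)) (at lambda0)) \<and>
         (\<forall>(Fu :: real \<Rightarrow> ('f \<Rightarrow>\<^sub>L 'f)) (Flu :: 'f \<Rightarrow>\<^sub>L 'f).
            (\<forall>lam. ((\<lambda>u. Fmap \<iota> A ell jts (T 0) lam u) has_derivative blinfun_apply (Fu lam)) (at 0)) \<and>
            (Fu has_derivative (\<lambda>s. s *\<^sub>R Flu)) (at lambda0) \<longrightarrow>
            {v. Fu lambda0 v = 0} = range (\<lambda>t. t *\<^sub>R T 0 (0, \<Phi>0)) \<and>
            Flu (T 0 (0, \<Phi>0)) \<notin> range (blinfun_apply (Fu lambda0)))"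
proof -
  obtain A' L' where "(A has_derivative A') (at 0)" and "(ell has_derivative L') (at 0)"
    using A_C1 l_C1 Sigma(3) unfolding C1_on_def by blast
  note partial_derivatives =
    Fmap_partial_derivatives[OF this, where \<iota> = \<iota> and jts = jts and S = "T 0" and lam\<^sub>0 = lambda0]
  have "linear (\<lambda>x. T 0 (0, x))"
    by (intro bounded_linear.linear bounded_linear_compose[OF blinfun.bounded_linear_right]
        bounded_linear_Pair bounded_linear_zero bounded_linear_ident)
  moreover have "linear (\<lambda>v. jts (ell 0 v))"
    by (intro bounded_linear.linear bounded_linear_compose[OF blinfun.bounded_linear_right]
        blinfun.bounded_linear_right)
  ultimately interpret factorised_eigenproblem "\<lambda>x. T 0 (0, x)" "\<lambda>v. jts (ell 0 v)" lambda0 \<Phi>0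
    using lam0 simple eigvec by (intro factorised_eigenproblem.intro) auto
  show ?thesis
  proof (intro conjI allI impI)
    show "\<exists>Fu Flu. (\<forall>lam. (Fmap \<iota> A ell jts (T 0) lam has_derivative blinfun_apply (Fu lam)) (at 0)) \<and>
        (Fu has_derivative (\<lambda>s. s *\<^sub>R Flu)) (at lambda0)"
      using partial_derivatives(1) .
    fix Fu Flu
    assume "(\<forall>lam. (Fmap \<iota> A ell jts (T 0) lam has_derivative blinfun_apply (Fu lam)) (at 0)) \<and>
        (Fu has_derivative (\<lambda>s. s *\<^sub>R Flu)) (at lambda0)"
    then have "blinfun_apply (Fu lambda0) = (\<lambda>v. v - lambda0 *\<^sub>R T 0 (0, jts (ell 0 v)))"
      and "blinfun_apply Flu = (\<lambda>v. - T 0 (0, jts (ell 0 v)))"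
      using partial_derivatives(2) by blast+
    with kernel_eq_span transversality
    show "{v. Fu lambda0 v = 0} = range (\<lambda>t. t *\<^sub>R T 0 (0, \<Phi>0))"
      and "Flu (T 0 (0, \<Phi>0)) \<notin> range (blinfun_apply (Fu lambda0))"
      by simp_all
  qed
qed

end
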